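(* Every BCK-algebra $\mathcal A$ of order $n$ satisfies $\operatorname{cd}(\mathcal A)\ge\frac{3n-2}{n^2}$, and for each $n\ge3$ this bound is attained: the algebra $\mathcal M_n$ defined by $\mathcal M_3=\mathcal{PI}$ and $\mathcal M_n=\mathcal M_{n-1}\oplus\top$ for $n>3$ is a (linear) BCK-algebra of order $n$ with $\operatorname{cd}(\mathcal M_n)=\frac{3n-2}{n^2}$.
   Context: A BCK-algebra is a set $A$ with a binary operation $\cdot$ and a constant $0$ such that for all $x,y,z\in A$: (BCK1) $((x\cdot y)\cdot(x\cdot z))\cdot(z\cdot y)=0$; (BCK2) $(x\cdot(x\cdot y))\cdot y=0$; (BCK3) $x\cdot x=0$; (BCK4) $0\cdot x=0$; (BCK5) $x\cdot y=0$ and $y\cdot x=0$ imply $x=y$. The order $x\le y$ iff $x\cdot y=0$; the algebra is linear if this order is a chain. Define $x\wedge y:=y\cdot(y\cdot x)$; for finite $\mathcal A$, $\operatorname{cd}(\mathcal A)=|\{(x,y)\in A^2:x\wedge y=y\wedge x\}|/|A|^2$. $\mathcal{PI}$ is the BCK-algebra on $\{0,1,2\}$ with $1\cdot0=1$, $2\cdot0=2$, $2\cdot1=2$ and all other products $0$. Iséki's extension $\mathcal A\oplus\top$ adjoins a new element $\top$ with $x\cdot\top=0$, $\top\cdot\top=0$, $\top\cdot x=\top$ for $x\in A$. *)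

theory Defs
  imports Complex_Main
begin

definition bck :: "'a set \<Rightarrow> ('a \<Rightarrow> 'a \<Rightarrow> 'a) \<Rightarrow> 'a \<Rightarrow> bool" where
  "bck A m z \<longleftrightarrow>
     z \<in> A \<and> (\<forall>x\<in>A. \<forall>y\<in>A. m x y \<in> A) \<and>
     (\<forall>x\<in>A. \<forall>y\<in>A. \<forall>w\<in>A. m (m (m x y) (m x w)) (m w y) = z) \<and>
     (\<forall>x\<in>A. \<forall>y\<in>A. m (m x (m x y)) y = z) \<and>
     (\<forall>x\<in>A. m x x = z) \<and>
     (\<forall>x\<in>A. m z x = z) \<and>
     (\<forall>x\<in>A. \<forall>y\<in>A. m x y = z \<and> m y x = z \<longrightarrow> x = y)"

definition bck_le :: "('a \<Rightarrow> 'a \<Rightarrow> 'a) \<Rightarrow> 'a \<Rightarrow> 'a \<Rightarrow> 'a \<Rightarrow> bool" where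
  "bck_le m z x y \<longleftrightarrow> m x y = z"

definition linear_bck :: "'a set \<Rightarrow> ('a \<Rightarrow> 'a \<Rightarrow> 'a) \<Rightarrow> 'a \<Rightarrow> bool" where
  "linear_bck A m z \<longleftrightarrow> bck A m z \<and> (\<forall>x\<in>A. \<forall>y\<in>A. bck_le m z x y \<or> bck_le m z y x)"

definition bck_meet :: "('a \<Rightarrow> 'a \<Rightarrow> 'a) \<Rightarrow> 'a \<Rightarrow> 'a \<Rightarrow> 'a" where
  "bck_meet m x y = m y (m y x)"

definition cd :: "'a set \<Rightarrow> ('a \<Rightarrow> 'a \<Rightarrow> 'a) \<Rightarrow> real" where
  "cd A m = real (card {(x, y) \<in> A \<times> A. bck_meet m x y = bck_meet m y x}) / real (card A) ^ 2"

definition PIop :: "nat \<Rightarrow> nat \<Rightarrow> nat" where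
  "PIop x y = (if x = 1 \<and> y = 0 then 1 else if x = 2 \<and> y = 0 then 2
               else if x = 2 \<and> y = 1 then 2 else 0)"

definition iseki_ext :: "'a \<Rightarrow> 'a \<Rightarrow> ('a \<Rightarrow> 'a \<Rightarrow> 'a) \<Rightarrow> 'a \<Rightarrow> 'a \<Rightarrow> 'a" where
  "iseki_ext t z m x y =
     (if y = t then z else if x = t then t else m x y)"

text \<open>Mop k is the operation of M_(k+3), on the carrier {0..<k+3}; the new top of
  M_(k+4) is the element k+3.\<close>
primrec Mop :: "nat \<Rightarrow> nat \<Rightarrow> nat \<Rightarrow> nat" where
  "Mop 0 = PIop"
| "Mop (Suc k) = iseki_ext (k + 3) 0 (Mop k)"

end

theory Submission
  imports Defs
begin

text \<open>In any BCK-algebra the meets x \<and> y and y \<and> x agree whenever x = y or one of them is 0,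
  since x \<cdot> x = 0, 0 \<cdot> x = 0 and x \<cdot> 0 = x; these 3n - 2 pairs give the lower bound.
  M_n is the chain 0 < 1 < ... < n - 1 with x \<cdot> y = 0 for x \<le> y and x \<cdot> y = x otherwise;
  there the meet of x < y is x in one order and 0 in the other, so no further pairs commute.\<close>

lemma bck_right_zero:
  assumes "bck A m z" "x \<in> A"
  shows "m x z = x"
proof -
  have closed: "\<And>x y. x \<in> A \<Longrightarrow> y \<in> A \<Longrightarrow> m x y \<in> A" and "z \<in> A"
   and bck2: "\<And>x y. x \<in> A \<Longrightarrow> y \<in> A \<Longrightarrow> m (m x (m x y)) y = z"
   and bck3: "\<And>x. x \<in> A \<Longrightarrow> m x x = z"
   and bck4: "\<And>x. x \<in> A \<Longrightarrow> m z x = z"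
   and bck5: "\<And>x y. x \<in> A \<Longrightarrow> y \<in> A \<Longrightarrow> m x y = z \<Longrightarrow> m y x = z \<Longrightarrow> x = y"
    using assms(1) unfolding bck_def by blast+
  have "m (m x z) x = z"
    using bck2[of x x] bck3[of x] assms(2) by simp
  moreover have "m x (m x z) = z"
    using bck2[of x z] bck5[of "m x (m x z)" z] bck4 closed assms(2) \<open>z \<in> A\<close> by simp
  ultimately show ?thesis
    using bck5[of "m x z" x] closed assms(2) \<open>z \<in> A\<close> by simp
qed

lemma bck_meet_commute_trivial:
  assumes "bck A m z" "x \<in> A" "y \<in> A" "x = y \<or> x = z \<or> y = z"
  shows "bck_meet m x y = bck_meet m y x"
proof -
  have "\<And>x. x \<in> A \<Longrightarrow> m x x = z" and "\<And>x. x \<in> A \<Longrightarrow> m z x = z" and "z \<in> A"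
    using assms(1) unfolding bck_def by blast+
  with assms bck_right_zero[OF assms(1)] show ?thesis
    unfolding bck_meet_def by auto
qed

lemma card_diagonal_or_axes:
  assumes "finite A" "z \<in> A"
  shows "card {(x, y) \<in> A \<times> A. x = y \<or> x = z \<or> y = z} = 3 * card A - 2"
proof -
  let ?D = "(\<lambda>x. (x, x)) ` A" and ?L = "Pair z ` (A - {z})" and ?R = "(\<lambda>x. (x, z)) ` (A - {z})"
  have "{(x, y) \<in> A \<times> A. x = y \<or> x = z \<or> y = z} = (?D \<union> ?L) \<union> ?R"
    using assms(2) by auto
  moreover have "card (?D \<union> ?L) = card A + (card A - 1)"
    using assms by (subst card_Un_disjoint) (auto simp: card_image inj_on_def)
  moreover have "card ((?D \<union> ?L) \<union> ?R) = card (?D \<union> ?L) + card ?R"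
    by (rule card_Un_disjoint) (use assms in auto)
  moreover have "card ?R = card A - 1"
    using assms by (subst card_image) (auto simp: inj_on_def)
  moreover have "card A \<ge> 1"
    using assms card_0_eq by fastforce
  ultimately show ?thesis
    by simp
qed

lemma cd_from_card:
  assumes "finite A" "z \<in> A"
    and "card {(x, y) \<in> A \<times> A. bck_meet m x y = bck_meet m y x} \<ge> 3 * card A - 2"
  shows "cd A m \<ge> (3 * real (card A) - 2) / real (card A) ^ 2"
proof -
  have "card A \<ge> 1"
    using assms card_0_eq by fastforce
  then have "3 * real (card A) - 2 = real (3 * card A - 2)"
    by (simp add: of_nat_diff)
  also have "\<dots> \<le> real (card {(x, y) \<in> A \<times> A. bck_meet m x y = bck_meet m y x})"
    using assms(3) by linarith
  finally show ?thesis
    unfolding cd_def by (simp add: divide_right_mono)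
qed

lemma bck_cd_lower_bound:
  assumes "bck A m z" "finite A"
  shows "cd A m \<ge> (3 * real (card A) - 2) / real (card A) ^ 2"
proof -
  have "z \<in> A"
    using assms(1) unfolding bck_def by blast
  have "{(x, y) \<in> A \<times> A. x = y \<or> x = z \<or> y = z}
      \<subseteq> {(x, y) \<in> A \<times> A. bck_meet m x y = bck_meet m y x}"
    using bck_meet_commute_trivial[OF assms(1)] by auto
  moreover have "finite {(x, y) \<in> A \<times> A. bck_meet m x y = bck_meet m y x}"
    by (rule finite_subset[of _ "A \<times> A"]) (use assms(2) in auto)
  ultimately have "card {(x, y) \<in> A \<times> A. x = y \<or> x = z \<or> y = z}
      \<le> card {(x, y) \<in> A \<times> A. bck_meet m x y = bck_meet m y x}"
    by (intro card_mono)
  with card_diagonal_or_axes[OF assms(2) \<open>z \<in> A\<close>] show ?thesis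
    by (intro cd_from_card[OF assms(2) \<open>z \<in> A\<close>]) simp
qed

definition chain_bck_op :: "'a::linorder \<Rightarrow> 'a \<Rightarrow> 'a \<Rightarrow> 'a" where
  "chain_bck_op z x y = (if x \<le> y then z else x)"

lemma bck_chain:
  assumes "z \<in> A" "\<forall>x\<in>A. z \<le> x"
  shows "bck A (chain_bck_op z) z"
  unfolding bck_def
proof (intro conjI ballI impI)
  fix x y w assume "x \<in> A" "y \<in> A" "w \<in> A"
  then show "chain_bck_op z (chain_bck_op z (chain_bck_op z x y) (chain_bck_op z x w))
      (chain_bck_op z w y) = z"
    using assms unfolding chain_bck_op_def by (auto split: if_splits dest: order_trans)
qed (use assms in \<open>auto simp: chain_bck_op_def split: if_splits dest: antisym\<close>)

lemma linear_bck_chain: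
  assumes "z \<in> A" "\<forall>x\<in>A. z \<le> x"
  shows "linear_bck A (chain_bck_op z) z"
  using bck_chain[OF assms] unfolding linear_bck_def bck_le_def chain_bck_op_def by auto

lemma bck_meet_chain:
  assumes "z \<le> y"
  shows "bck_meet (chain_bck_op z) x y = (if y \<le> x then y else z)"
  using assms unfolding bck_meet_def chain_bck_op_def by auto

lemma chain_commuting_pairs:
  assumes "\<forall>x\<in>A. z \<le> x"
  shows "{(x, y) \<in> A \<times> A. bck_meet (chain_bck_op z) x y = bck_meet (chain_bck_op z) y x}
       = {(x, y) \<in> A \<times> A. x = y \<or> x = z \<or> y = z}"
  using assms by (auto simp: bck_meet_chain split: if_splits dest: antisym)

lemma Mop_eq_chain_bck_op:
  "x < k + 3 \<Longrightarrow> y < k + 3 \<Longrightarrow> Mop k x y = chain_bck_op 0 x y"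
  by (induction k arbitrary: x y) (auto simp: PIop_def iseki_ext_def chain_bck_op_def)

lemma linear_bck_cong:
  assumes "linear_bck A m' z" "\<And>x y. x \<in> A \<Longrightarrow> y \<in> A \<Longrightarrow> m x y = m' x y"
  shows "linear_bck A m z"
proof -
  have "\<And>x y. x \<in> A \<Longrightarrow> y \<in> A \<Longrightarrow> m' x y \<in> A"
    using assms(1) unfolding linear_bck_def bck_def by blast
  with assms show ?thesis
    unfolding linear_bck_def bck_def bck_le_def by simp
qed

lemma cd_cong:
  assumes "\<And>x y. x \<in> A \<Longrightarrow> y \<in> A \<Longrightarrow> m x y = m' x y"
    and "\<And>x y. x \<in> A \<Longrightarrow> y \<in> A \<Longrightarrow> m' x y \<in> A"
  shows "cd A m = cd A m'"
proof -
  have "{(x, y) \<in> A \<times> A. bck_meet m x y = bck_meet m y x}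
      = {(x, y) \<in> A \<times> A. bck_meet m' x y = bck_meet m' y x}"
    using assms unfolding bck_meet_def by auto
  then show ?thesis
    unfolding cd_def by simp
qed

lemma cd_chain:
  assumes "finite A" "z \<in> A" "\<forall>x\<in>A. z \<le> x"
  shows "cd A (chain_bck_op z) = (3 * real (card A) - 2) / real (card A) ^ 2"
proof -
  have "card A \<ge> 1"
    using assms card_0_eq by fastforce
  then have "real (3 * card A - 2) = 3 * real (card A) - 2"
    by (simp add: of_nat_diff)
  then show ?thesis
    unfolding cd_def chain_commuting_pairs[OF assms(3)] card_diagonal_or_axes[OF assms(1,2)]
    by simp
qed

theorem theorem5p6:
  shows "(\<forall>(A :: 'a set) m z. bck A m z \<and> finite A \<longrightarrow>
            cd A m \<ge> (3 * real (card A) - 2) / real (card A) ^ 2)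
       \<and> (\<forall>n::nat. n \<ge> 3 \<longrightarrow>
            linear_bck {0..<n} (Mop (n - 3)) 0 \<and> card {0..<n} = n \<and>
            cd {0..<n} (Mop (n - 3)) = (3 * real n - 2) / real n ^ 2)"
proof (intro conjI allI impI)
  show "cd A m \<ge> (3 * real (card A) - 2) / real (card A) ^ 2"
    if "bck A m z \<and> finite A" for A :: "'a set" and m z
    using bck_cd_lower_bound[of A m z] that by simp
next
  fix n :: nat
  assume "n \<ge> 3"
  then have Mop_chain: "\<And>x y. x \<in> {0..<n} \<Longrightarrow> y \<in> {0..<n} \<Longrightarrow>
      Mop (n - 3) x y = chain_bck_op 0 x y"
    by (simp add: Mop_eq_chain_bck_op)
  have "0 \<in> {0..<n}"
    using \<open>n \<ge> 3\<close> by simp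
  have bottom: "\<forall>x\<in>{0..<n}. 0 \<le> x"
    by simp
  show "linear_bck {0..<n} (Mop (n - 3)) 0"
    by (rule linear_bck_cong[OF linear_bck_chain[OF \<open>0 \<in> {0..<n}\<close> bottom] Mop_chain])
  show "card {0..<n} = n"
    by simp
  have "cd {0..<n} (Mop (n - 3)) = cd {0..<n} (chain_bck_op 0)"
    by (rule cd_cong[OF Mop_chain]) (auto simp: chain_bck_op_def)
  also have "\<dots> = (3 * real n - 2) / real n ^ 2"
    using cd_chain[OF _ \<open>0 \<in> {0..<n}\<close> bottom] by simp
  finally show "cd {0..<n} (Mop (n - 3)) = (3 * real n - 2) / real n ^ 2" .
qed

end
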